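(* For any field $\mathbb{F}$ and integers $1\le k\le n$, the disjointness matrix satisfies $\mathcal{R}^{rc}_{R_n}\big(2\binom{n}{<k}\big)\le\binom{n-k}{\le n-2k}$ over $\mathbb{F}$.
   Context: $R_n\in\{0,1\}^{2^n\times 2^n}$, indexed by $x,y\in\{0,1\}^n$, has $R_n[x,y]=1$ iff no coordinate $\ell$ has $x[\ell]=y[\ell]=1$. Row/column rigidity: $\mathcal{R}^{rc}_A(r)=\min\{\max(\mathrm{nnz_r}(B),\mathrm{nnz_c}(B)) : \mathrm{rank}(A+B)\le r\}$, where $\mathrm{nnz_r}(B)$ (resp. $\mathrm{nnz_c}(B)$) is the maximum number of nonzero entries in a row (resp. column) of $B$. $\binom{n}{<k}=\sum_{i=0}^{k-1}\binom{n}{i}$, $\binom{m}{\le j}=\sum_{i=0}^{j}\binom{m}{i}$ (empty sum $=0$). *)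

theory Defs
  imports "Jordan_Normal_Form.DL_Rank"
begin

text \<open>Vectors x in {0,1}^n are encoded as natural numbers x < 2^n,
  with x[l] = bit x l for l < n.  The disjointness matrix R_n over a field 'a.\<close>
definition disj_mat :: "nat \<Rightarrow> 'a::field mat" where
  "disj_mat n = mat (2^n) (2^n)
     (\<lambda>(x, y). if \<not> (\<exists>l<n. bit x l \<and> bit y l) then 1 else 0)"

definition mrank :: "'a::field mat \<Rightarrow> nat" where
  "mrank A = vec_space.rank (dim_row A) A"

definition nnz_r :: "'a::zero mat \<Rightarrow> nat" where
  "nnz_r B = Max (insert 0 ((\<lambda>i. card {j. j < dim_col B \<and> B $$ (i, j) \<noteq> 0}) ` {..<dim_row B}))"

definition nnz_c :: "'a::zero mat \<Rightarrow> nat" where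
  "nnz_c B = Max (insert 0 ((\<lambda>j. card {i. i < dim_row B \<and> B $$ (i, j) \<noteq> 0}) ` {..<dim_col B}))"

definition rigidity_rc :: "'a::field mat \<Rightarrow> nat \<Rightarrow> nat" where
  "rigidity_rc A r = Inf {max (nnz_r B) (nnz_c B) | B.
      B \<in> carrier_mat (dim_row A) (dim_col A) \<and> mrank (A + B) \<le> r}"

definition binom_lt :: "nat \<Rightarrow> nat \<Rightarrow> nat" where
  "binom_lt n k = (\<Sum>i<k. n choose i)"

text \<open>binom(m,<=j) = sum_{i=0}^{j} C(m,i) for an integer j (empty sum = 0 if j<0)\<close>
definition binom_le :: "nat \<Rightarrow> int \<Rightarrow> nat" where
  "binom_le m j = (\<Sum>i\<in>{i::nat. int i \<le> j}. m choose i)"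

end

theory Submission
  imports Defs
begin

text \<open>Kill the entries of R_n whose row and column both have weight at least k.
  The rest of the matrix lives on the rows and the columns of weight below k, of which
  there are at most binom(n,<k) each, so the modified matrix has rank at most
  2 binom(n,<k).  A row of weight w at least k loses only the entries at columns of
  weight at least k disjoint from it, i.e. subsets of size at least k of an (n-w)-set;
  there are at most sum over j from k to n-k of C(n-k, j) = binom(n-k, <= n-2k) of them.
  Columns are handled symmetrically.\<close>

lemma card_subsets_card_in:
  assumes "finite C" "finite J"
  shows "card {S. S \<subseteq> C \<and> card S \<in> J} = (\<Sum>j\<in>J. card C choose j)"
proof -
  have "{S. S \<subseteq> C \<and> card S \<in> J} = (\<Union>j\<in>J. {S. S \<subseteq> C \<and> card S = j})" by auto
  moreover have "card (\<Union>j\<in>J. {S. S \<subseteq> C \<and> card S = j}) = (\<Sum>j\<in>J. card {S. S \<subseteq> C \<and> card S = j})"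
    by (rule card_UN_disjoint) (use assms in \<open>auto intro: finite_subset[of _ "Pow C"]\<close>)
  ultimately show ?thesis using n_subsets[OF assms(1)] by simp
qed

lemma binom_le_upper_tail: "binom_le m (int m - int k) = (\<Sum>j=k..m. m choose j)"
proof (cases "k \<le> m")
  case False
  then show ?thesis unfolding binom_le_def by (simp add: not_le)
next
  case True
  then have "{i::nat. int i \<le> int m - int k} = {..m - k}" by auto
  moreover have "(\<Sum>j=k..m. m choose j) = (\<Sum>i\<le>m - k. m choose i)"
    by (rule sum.reindex_bij_witness[where i="\<lambda>i. m - i" and j="\<lambda>j. m - j"])
       (use True in \<open>auto simp: binomial_symmetric[symmetric]\<close>)
  ultimately show ?thesis unfolding binom_le_def by simp
qed

definition bit_support :: "nat \<Rightarrow> nat \<Rightarrow> nat set" where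
  "bit_support n x = {l. l < n \<and> bit x l}"

definition weight :: "nat \<Rightarrow> nat \<Rightarrow> nat" where
  "weight n x = card (bit_support n x)"

lemma bit_support_subset: "bit_support n x \<subseteq> {..<n}"
  by (auto simp: bit_support_def)

lemma inj_on_bit_support: "inj_on (bit_support n) {..<2^n}"
proof (rule inj_onI)
  fix x y :: nat
  assume "x \<in> {..<2^n}" "y \<in> {..<2^n}" and eq: "bit_support n x = bit_support n y"
  then have "take_bit n x = x" "take_bit n y = y" by (auto simp: take_bit_nat_eq_self_iff)
  moreover have "bit x l = bit y l" if "l < n" for l
    using eq that by (auto simp: bit_support_def set_eq_iff)
  ultimately show "x = y" by (metis bit_eqI bit_take_bit_iff)
qed

lemma card_low_weight_le: "card {x. x < 2^n \<and> weight n x < k} \<le> binom_lt n k"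
proof -
  have "card {x. x < 2^n \<and> weight n x < k} \<le> card {S. S \<subseteq> {..<n} \<and> card S \<in> {..<k}}"
  proof (rule card_inj_on_le)
    show "inj_on (bit_support n) {x. x < 2^n \<and> weight n x < k}"
      by (rule inj_on_subset[OF inj_on_bit_support]) auto
    show "bit_support n ` {x. x < 2^n \<and> weight n x < k} \<subseteq> {S. S \<subseteq> {..<n} \<and> card S \<in> {..<k}}"
      using bit_support_subset by (auto simp: weight_def)
  qed (auto intro: finite_subset[of _ "Pow {..<n}"])
  also have "\<dots> = binom_lt n k"
    unfolding binom_lt_def by (subst card_subsets_card_in) auto
  finally show ?thesis .
qed

lemma card_high_weight_disjoint_le:
  assumes "k \<le> n"
  shows "card {y. y < 2^n \<and> k \<le> weight n x \<and> k \<le> weight n y \<and> \<not> (\<exists>l<n. bit x l \<and> bit y l)}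
           \<le> (\<Sum>j=k..n - k. (n - k) choose j)"
    (is "card ?Y \<le> _")
proof (cases "k \<le> weight n x")
  case False
  then show ?thesis by simp
next
  case True
  define C where "C = {..<n} - bit_support n x"
  have fin: "finite C" by (simp add: C_def)
  have card_C: "card C = n - weight n x"
    unfolding C_def weight_def using bit_support_subset
    by (subst card_Diff_subset) (auto intro: finite_subset)
  have "bit_support n y \<subseteq> C" if "y \<in> ?Y" for y
    using that by (auto simp: C_def bit_support_def)
  then have "bit_support n ` ?Y \<subseteq> {S. S \<subseteq> C \<and> card S \<in> {k..card C}}"
    by (auto simp: weight_def intro: card_mono[OF fin])
  then have "card ?Y \<le> card {S. S \<subseteq> C \<and> card S \<in> {k..card C}}"
  proof (rule card_inj_on_le[rotated])
    show "inj_on (bit_support n) ?Y"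
      by (rule inj_on_subset[OF inj_on_bit_support]) auto
  qed (use fin in \<open>auto intro: finite_subset[of _ "Pow C"]\<close>)
  also have "\<dots> = (\<Sum>j=k..card C. card C choose j)"
    using card_subsets_card_in[OF fin, of "{k..card C}"] by simp
  also have "\<dots> \<le> (\<Sum>j=k..card C. (n - k) choose j)"
    using card_C True by (intro sum_mono binomial_right_mono) simp
  also have "\<dots> \<le> (\<Sum>j=k..n - k. (n - k) choose j)"
    using card_C True by (intro sum_mono2) auto
  finally show ?thesis .
qed

lemma rank_sum_outer_products_le:
  assumes "finite S"
  shows "vec_space.rank N (mat N M (\<lambda>(i, j). \<Sum>x\<in>S. f x i * g x j) :: 'a::field mat) \<le> card S"
  using assms
proof (induction S rule: finite_induct)
  case empty
  have "(mat N M (\<lambda>(i, j). \<Sum>x\<in>{}. f x i * g x j) :: 'a mat) = 0\<^sub>m N M"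
    by (rule eq_matI) auto
  then show ?case by (simp only: vec_space.rank_0I card.empty order_refl)
next
  case (insert x S)
  let ?P = "mat N M (\<lambda>(i, j). f x i * g x j) :: 'a mat"
  let ?Q = "mat N M (\<lambda>(i, j). \<Sum>x\<in>S. f x i * g x j) :: 'a mat"
  have "(mat N M (\<lambda>(i, j). \<Sum>x\<in>insert x S. f x i * g x j) :: 'a mat) = ?P + ?Q"
    by (rule eq_matI) (use insert in auto)
  moreover have "vec_space.rank N (?P + ?Q) \<le> vec_space.rank N ?P + vec_space.rank N ?Q"
    by (rule vec_space.rank_subadditive) auto
  moreover have "vec_space.rank N ?P \<le> 1"
    by (rule vec_space.rank_le_1_product_entries[where f="f x" and g="g x"]) auto
  ultimately show ?case using insert by simp
qed

text \<open>A matrix supported on the rows in R and the columns in C is the sum of one rank-one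
  matrix per row in R and one per column in C.\<close>
lemma rank_le_card_rows_cols:
  fixes A :: "'a::field mat"
  assumes A: "A \<in> carrier_mat N M" and "finite R" "finite C"
    and zero: "\<And>i j. i < N \<Longrightarrow> j < M \<Longrightarrow> i \<notin> R \<Longrightarrow> j \<notin> C \<Longrightarrow> A $$ (i, j) = 0"
  shows "vec_space.rank N A \<le> card R + card C"
proof -
  define P where "P = (mat N M (\<lambda>(i, j). \<Sum>x\<in>R. (if i = x then 1 else 0) * A $$ (x, j)) :: 'a mat)"
  define Q where "Q = (mat N M (\<lambda>(i, j). \<Sum>x\<in>C. (if i \<notin> R then A $$ (i, x) else 0)
                                               * (if j = x then 1 else 0)) :: 'a mat)"
  have A_eq: "A = P + Q"
  proof (rule eq_matI)
    fix i j assume "i < dim_row (P + Q)" "j < dim_col (P + Q)"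
    then have ij: "i < N" "j < M" by (auto simp: P_def Q_def)
    have "P $$ (i, j) = (if i \<in> R then A $$ (i, j) else 0)"
      using ij \<open>finite R\<close> by (simp add: P_def if_distrib[where f="\<lambda>a. a * _"] cong: if_cong)
    moreover have "Q $$ (i, j) = (if i \<notin> R \<and> j \<in> C then A $$ (i, j) else 0)"
      using ij \<open>finite C\<close> by (simp add: Q_def if_distrib[where f="\<lambda>a. _ * a"] cong: if_cong)
    moreover have "(P + Q) $$ (i, j) = P $$ (i, j) + Q $$ (i, j)"
      by (rule index_add_mat) (use ij in \<open>simp_all add: Q_def\<close>)
    ultimately show "A $$ (i, j) = (P + Q) $$ (i, j)"
      using ij zero by auto
  qed (use A in \<open>auto simp: P_def Q_def\<close>)
  have "vec_space.rank N A \<le> vec_space.rank N P + vec_space.rank N Q"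
    unfolding A_eq by (rule vec_space.rank_subadditive) (auto simp: P_def Q_def)
  also have "\<dots> \<le> card R + card C"
    unfolding P_def Q_def
    by (intro add_mono rank_sum_outer_products_le \<open>finite R\<close> \<open>finite C\<close>)
  finally show ?thesis .
qed

lemma nnz_r_le:
  assumes "\<And>i. i < dim_row B \<Longrightarrow> card {j. j < dim_col B \<and> B $$ (i, j) \<noteq> 0} \<le> b"
  shows "nnz_r B \<le> b"
  unfolding nnz_r_def using assms by (subst Max_le_iff) auto

lemma nnz_c_le:
  assumes "\<And>j. j < dim_col B \<Longrightarrow> card {i. i < dim_row B \<and> B $$ (i, j) \<noteq> 0} \<le> b"
  shows "nnz_c B \<le> b"
  unfolding nnz_c_def using assms by (subst Max_le_iff) auto

lemma rigidity_rc_le: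
  assumes "B \<in> carrier_mat (dim_row A) (dim_col A)" "mrank (A + B) \<le> r"
  shows "rigidity_rc A r \<le> max (nnz_r B) (nnz_c B)"
  unfolding rigidity_rc_def by (rule cInf_lower) (use assms in auto)

definition high_weight_cancellation :: "nat \<Rightarrow> nat \<Rightarrow> 'a::field mat" where
  "high_weight_cancellation n k = mat (2^n) (2^n) (\<lambda>(x, y).
     if k \<le> weight n x \<and> k \<le> weight n y \<and> \<not> (\<exists>l<n. bit x l \<and> bit y l) then - 1 else 0)"

lemma high_weight_cancellation_carrier:
  "high_weight_cancellation n k \<in> carrier_mat (2^n) (2^n)"
  by (simp add: high_weight_cancellation_def)

lemma mrank_disj_mat_plus_high_weight_cancellation:
  "mrank (disj_mat n + high_weight_cancellation n k :: 'a::field mat) \<le> 2 * binom_lt n k"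
proof -
  let ?M = "disj_mat n + high_weight_cancellation n k :: 'a mat"
  let ?L = "{x. x < 2^n \<and> weight n x < k}"
  have "mrank ?M = vec_space.rank (2^n) ?M"
    by (simp add: mrank_def high_weight_cancellation_def)
  also have "\<dots> \<le> card ?L + card ?L"
    by (rule rank_le_card_rows_cols[of _ "2^n" "2^n"])
       (auto simp: disj_mat_def high_weight_cancellation_def)
  also have "\<dots> \<le> 2 * binom_lt n k"
    using card_low_weight_le[of n k] by simp
  finally show ?thesis .
qed

lemma nnz_r_high_weight_cancellation:
  assumes "k \<le> n"
  shows "nnz_r (high_weight_cancellation n k :: 'a::field mat) \<le> (\<Sum>j=k..n - k. (n - k) choose j)"
proof (rule nnz_r_le)
  fix x
  let ?B = "high_weight_cancellation n k :: 'a mat"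
  assume "x < dim_row ?B"
  then have "{y. y < dim_col ?B \<and> ?B $$ (x, y) \<noteq> 0}
      = {y. y < 2^n \<and> k \<le> weight n x \<and> k \<le> weight n y \<and> \<not> (\<exists>l<n. bit x l \<and> bit y l)}"
    by (auto simp: high_weight_cancellation_def split: if_splits)
  then show "card {y. y < dim_col ?B \<and> ?B $$ (x, y) \<noteq> 0} \<le> (\<Sum>j=k..n - k. (n - k) choose j)"
    using card_high_weight_disjoint_le[OF assms] by simp
qed

lemma nnz_c_high_weight_cancellation:
  assumes "k \<le> n"
  shows "nnz_c (high_weight_cancellation n k :: 'a::field mat) \<le> (\<Sum>j=k..n - k. (n - k) choose j)"
proof (rule nnz_c_le)
  fix y
  let ?B = "high_weight_cancellation n k :: 'a mat"
  assume "y < dim_col ?B"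
  then have "{x. x < dim_row ?B \<and> ?B $$ (x, y) \<noteq> 0}
      = {x. x < 2^n \<and> k \<le> weight n y \<and> k \<le> weight n x \<and> \<not> (\<exists>l<n. bit y l \<and> bit x l)}"
    by (auto simp: high_weight_cancellation_def split: if_splits)
  then show "card {x. x < dim_row ?B \<and> ?B $$ (x, y) \<noteq> 0} \<le> (\<Sum>j=k..n - k. (n - k) choose j)"
    using card_high_weight_disjoint_le[OF assms] by simp
qed

theorem mainTheorem11:
  fixes n k :: nat
  assumes "1 \<le> k" and "k \<le> n"
  shows "rigidity_rc (disj_mat n :: 'a::field mat) (2 * binom_lt n k)
           \<le> binom_le (n - k) (int n - 2 * int k)"
proof -
  let ?B = "high_weight_cancellation n k :: 'a mat"
  have "rigidity_rc (disj_mat n :: 'a mat) (2 * binom_lt n k) \<le> max (nnz_r ?B) (nnz_c ?B)"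
    by (rule rigidity_rc_le[OF _ mrank_disj_mat_plus_high_weight_cancellation])
       (simp add: disj_mat_def high_weight_cancellation_carrier)
  also have "\<dots> \<le> (\<Sum>j=k..n - k. (n - k) choose j)"
    using nnz_r_high_weight_cancellation[OF assms(2)] nnz_c_high_weight_cancellation[OF assms(2)]
    by simp
  also have "\<dots> = binom_le (n - k) (int n - 2 * int k)"
    using binom_le_upper_tail[of "n - k" k] assms(2) by (simp add: of_nat_diff)
  finally show ?thesis .
qed

end
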